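(* Let $T$ be a rooted binary phylogenetic $X$-tree with $|X|\geq 3$ and strictly positive edge lengths, and let $X'\subset X$ be such that the ranking $\pi_T$ is strict and reversible with respect to $X'$ (with induced subtree $\widetilde{T}=T_{\widetilde X}$, $\widetilde{X}=X\setminus X'$). Then for every cherry $[x_i,x_j]$ of $T$ we have $|X'\cap\{x_i,x_j\}|\geq 1$, i.e. at least one leaf of every cherry is deleted.
   Context: A rooted binary phylogenetic $X$-tree ($X$ a finite nonempty set, $|X|=n$) is a rooted tree whose root $\rho$ has in-degree 0 and out-degree 2, all edges directed away from $\rho$, all other interior vertices have in-degree 1 and out-degree 2, and whose leaves are bijectively labelled by $X$ (for $|X|=1$ the tree may be a single vertex). Every edge $e$ has a strictly positive length $\lambda_e$. The Fair Proportion index of $x\in X$ is $FP_T(x)=\sum_{e\in P(T;\rho,x)}\lambda_e/D_e$, where $P(T;\rho,x)$ is the path from $\rho$ to $x$ and $D_e$ is the number of leaves descended from $e$. A cherry is a pair of leaves with the same parent. For $Y\subseteq X$, the induced subtree $T_Y$ is obtained from the minimal subtree of $T$ connecting $Y$ by suppressing all non-root vertices of in- and out-degree 1, adding the lengths of merged edges; if the root then has out-degree 1, it and its incident edge are deleted. The ranking $\pi_T$ orders $X$ by decreasing $FP_T$; it is strict if all values $FP_T(x)$, $x\in X$, are pairwise distinct. For $X'\subset X$, $\widetilde X=X\setminus X'$ and $\widetilde T=T_{\widetilde X}$, a strict ranking $\pi_T$ is reversible with respect to $X'$ if for all distinct $x_i,x_j\in\widetilde X$, $FP_T(x_i)>FP_T(x_j)$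 implies $FP_{\widetilde T}(x_i)<FP_{\widetilde T}(x_j)$. *)

theory Defs
  imports Complex_Main
begin

text \<open>Leaf x is a leaf labelled x (also the one-vertex tree);
  Node l a r b is an interior vertex with left child subtree l reached by an
  edge of length a and right child subtree r reached by an edge of length b.\<close>

datatype 'a ptree = Leaf 'a | Node "'a ptree" real "'a ptree" real

primrec leaf_list :: "'a ptree \<Rightarrow> 'a list" where
  "leaf_list (Leaf x) = [x]"
| "leaf_list (Node l a r b) = leaf_list l @ leaf_list r"

definition leaves :: "'a ptree \<Rightarrow> 'a set" where
  "leaves t = set (leaf_list t)"

primrec pos_lengths :: "'a ptree \<Rightarrow> bool" where
  "pos_lengths (Leaf x) = True"
| "pos_lengths (Node l a r b) = (a > 0 \<and> b > 0 \<and> pos_lengths l \<and> pos_lengths r)"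

definition phylo_tree :: "'a ptree \<Rightarrow> bool" where
  "phylo_tree t \<longleftrightarrow> distinct (leaf_list t) \<and> pos_lengths t"

text \<open>Fair Proportion index: sum over edges e on the root-to-x path of
  length(e) / (number of leaves below e).\<close>
primrec FP :: "'a ptree \<Rightarrow> 'a \<Rightarrow> real" where
  "FP (Leaf y) x = 0"
| "FP (Node l a r b) x =
     (if x \<in> leaves l then a / real (card (leaves l)) + FP l x
      else if x \<in> leaves r then b / real (card (leaves r)) + FP r x
      else 0)"

primrec is_cherry :: "'a ptree \<Rightarrow> 'a \<Rightarrow> 'a \<Rightarrow> bool" where
  "is_cherry (Leaf z) x y = False"
| "is_cherry (Node l a r b) x y =
     ((l = Leaf x \<and> r = Leaf y) \<or> (l = Leaf y \<and> r = Leaf x)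
      \<or> is_cherry l x y \<or> is_cherry r x y)"

text \<open>Restriction to a leaf set Y: returns the pruned subtree (with all
  degree-2 vertices suppressed, merged edge lengths added) together with the
  accumulated length of the path from the root of t down to the root of the
  pruned subtree; None if no leaf of Y lies in t.\<close>
primrec restr :: "'a set \<Rightarrow> 'a ptree \<Rightarrow> ('a ptree \<times> real) option" where
  "restr Y (Leaf x) = (if x \<in> Y then Some (Leaf x, 0) else None)"
| "restr Y (Node l a r b) =
     (case (restr Y l, restr Y r) of
        (None, None) \<Rightarrow> None
      | (Some (l', c), None) \<Rightarrow> Some (l', a + c)
      | (None, Some (r', d)) \<Rightarrow> Some (r', b + d)
      | (Some (l', c), Some (r', d)) \<Rightarrow> Some (Node l' (a + c) r' (b + d), 0))"

text \<open>Induced subtree T_Y (the edge above the new root, if any, is deleted).\<close>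
definition induced :: "'a ptree \<Rightarrow> 'a set \<Rightarrow> 'a ptree" where
  "induced t Y = fst (the (restr Y t))"

definition strict_ranking :: "'a ptree \<Rightarrow> bool" where
  "strict_ranking t \<longleftrightarrow> inj_on (FP t) (leaves t)"

definition reversible :: "'a ptree \<Rightarrow> 'a set \<Rightarrow> bool" where
  "reversible t X' \<longleftrightarrow> strict_ranking t \<and>
     (let Xt = leaves t - X'; Tt = induced t Xt in
      \<forall>xi \<in> Xt. \<forall>xj \<in> Xt. xi \<noteq> xj \<longrightarrow> FP t xi > FP t xj \<longrightarrow> FP Tt xi < FP Tt xj)"

end

theory Submission
  imports Defs
begin

text \<open>The two leaves x, y of a cherry with pendant edges of lengths a, b share the whole path
  from the root to their parent, so FP x - FP y = a - b in every tree containing the cherry.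
  If neither leaf is deleted, the cherry, with the same pendant edge lengths, survives in the
  induced subtree; the difference of the two FP values is therefore unchanged, whereas
  reversibility requires its sign to flip.\<close>

primrec subtree :: "'a ptree \<Rightarrow> 'a ptree \<Rightarrow> bool" where
  "subtree s (Leaf z) \<longleftrightarrow> s = Leaf z"
| "subtree s (Node l a r b) \<longleftrightarrow> s = Node l a r b \<or> subtree s l \<or> subtree s r"

lemma subtree_refl [simp]: "subtree t t"
  by (cases t) simp_all

lemma leaves_Leaf [simp]: "leaves (Leaf x) = {x}"
  by (simp add: leaves_def)

lemma leaves_Node [simp]: "leaves (Node l a r b) = leaves l \<union> leaves r"
  by (simp add: leaves_def)

lemma leaves_subtree: "subtree s t \<Longrightarrow> leaves s \<subseteq> leaves t"
  by (induction t) auto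

lemma distinct_leaf_list_subtree:
  "subtree s t \<Longrightarrow> distinct (leaf_list t) \<Longrightarrow> distinct (leaf_list s)"
  by (induction t) auto

lemma is_cherry_imp_subtree:
  "is_cherry t x y \<Longrightarrow>
     \<exists>a b. subtree (Node (Leaf x) a (Leaf y) b) t \<or> subtree (Node (Leaf y) a (Leaf x) b) t"
  by (induction t) fastforce+

lemma FP_cherry_diff:
  assumes "subtree (Node (Leaf x) a (Leaf y) b) t" and "distinct (leaf_list t)"
  shows "FP t x - FP t y = a - b"
  using assms
proof (induction t)
  case (Leaf z)
  then show ?case by simp
next
  case (Node l a' r b')
  let ?c = "Node (Leaf x) a (Leaf y) b"
  from Node.prems(1) consider "?c = Node l a' r b'" | "subtree ?c l" | "subtree ?c r"
    by auto
  then show ?case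
  proof cases
    case 1
    then show ?thesis using Node.prems(2) by (auto simp: leaves_def)
  next
    case 2
    then have "x \<in> leaves l" "y \<in> leaves l" by (auto dest: leaves_subtree)
    with Node.IH(1)[OF 2] Node.prems(2) show ?thesis by simp
  next
    case 3
    then have "x \<in> leaves r" "y \<in> leaves r" by (auto dest: leaves_subtree)
    moreover have "x \<notin> leaves l" "y \<notin> leaves l"
      using calculation Node.prems(2) by (auto simp: leaves_def)
    ultimately show ?thesis using Node.IH(2)[OF 3] Node.prems(2) by simp
  qed
qed

lemma restr_eq_None_iff: "restr Y t = None \<longleftrightarrow> leaves t \<inter> Y = {}"
  by (induction t) (auto simp: leaves_def split: option.splits)

lemma leaf_list_restr:
  "restr Y t = Some (t', c) \<Longrightarrow> leaf_list t' = filter (\<lambda>z. z \<in> Y) (leaf_list t)"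
  by (induction t arbitrary: t' c)
     (auto simp: restr_eq_None_iff leaves_def filter_empty_conv split: option.splits if_splits)

lemma restr_Some_iff: "(\<exists>t' c. restr Y t = Some (t', c)) \<longleftrightarrow> leaves t \<inter> Y \<noteq> {}"
  using restr_eq_None_iff by (metis not_None_eq surj_pair)

text \<open>The hypothesis restr Y s = Some (s, 0) says that restriction to Y leaves s intact.\<close>

lemma subtree_restr:
  assumes "restr Y s = Some (s, 0)" and "subtree s t" and "restr Y t = Some (t', c)"
  shows "subtree s t'"
proof -
  have s_meets_Y: "leaves s \<inter> Y \<noteq> {}"
    using assms(1) restr_eq_None_iff by (metis option.distinct(1))
  show ?thesis
    using assms(2,3)
  proof (induction t arbitrary: t' c)
    case (Leaf z)
    then show ?case using assms(1) by simp
  next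
    case (Node l a r b)
    from Node.prems(1) consider "s = Node l a r b" | "subtree s l" | "subtree s r" by auto
    then show ?case
    proof cases
      case 1
      then show ?thesis using assms(1) Node.prems(2) by simp
    next
      case 2
      then have "leaves l \<inter> Y \<noteq> {}"
        using s_meets_Y leaves_subtree by blast
      then obtain l' c' where "restr Y l = Some (l', c')"
        using restr_Some_iff[of Y l] by blast
      with Node.IH(1)[OF 2] Node.prems(2) show ?thesis by (auto split: option.splits)
    next
      case 3
      then have "leaves r \<inter> Y \<noteq> {}"
        using s_meets_Y leaves_subtree by blast
      then obtain r' c' where "restr Y r = Some (r', c')"
        using restr_Some_iff[of Y r] by blast
      with Node.IH(2)[OF 3] Node.prems(2) show ?thesis by (auto split: option.splits)
    qed
  qed
qed

lemma subtree_induced: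
  assumes "restr Y s = Some (s, 0)" and "subtree s t" and "leaves t \<inter> Y \<noteq> {}"
  shows "subtree s (induced t Y)"
proof -
  obtain t' c where "restr Y t = Some (t', c)"
    using assms(3) restr_Some_iff[of Y t] by blast
  with subtree_restr[OF assms(1,2)] show ?thesis by (simp add: induced_def)
qed

lemma distinct_leaf_list_induced:
  assumes "distinct (leaf_list t)" and "leaves t \<inter> Y \<noteq> {}"
  shows "distinct (leaf_list (induced t Y))"
proof -
  obtain t' c where "restr Y t = Some (t', c)"
    using assms(2) restr_Some_iff[of Y t] by blast
  with leaf_list_restr[of Y t] assms(1) show ?thesis by (simp add: induced_def)
qed

lemma reversible_no_kept_cherry:
  assumes "distinct (leaf_list T)" and "reversible T X'"
    and cherry: "subtree (Node (Leaf u) a (Leaf v) b) T" and "u \<notin> X'" "v \<notin> X'"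
  shows False
proof -
  define Y where "Y = leaves T - X'"
  define T' where "T' = induced T Y"
  have uv_Y: "u \<in> Y" "v \<in> Y"
    using leaves_subtree[OF cherry] assms(4,5) by (auto simp: Y_def)
  then have T_meets_Y: "leaves T \<inter> Y \<noteq> {}"
    by (auto simp: Y_def)
  have "restr Y (Node (Leaf u) a (Leaf v) b) = Some (Node (Leaf u) a (Leaf v) b, 0)"
    using uv_Y by simp
  then have "subtree (Node (Leaf u) a (Leaf v) b) T'"
    unfolding T'_def using subtree_induced cherry T_meets_Y by blast
  moreover have "distinct (leaf_list T')"
    unfolding T'_def using distinct_leaf_list_induced assms(1) T_meets_Y by blast
  ultimately have "FP T' u - FP T' v = a - b"
    by (rule FP_cherry_diff)
  moreover have "FP T u - FP T v = a - b"
    using cherry assms(1) by (rule FP_cherry_diff)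
  ultimately have same_diff: "FP T' u - FP T' v = FP T u - FP T v"
    by simp
  have "u \<noteq> v"
    using distinct_leaf_list_subtree[OF cherry assms(1)] by simp
  have inj: "inj_on (FP T) (leaves T)"
    and flips: "\<And>x y. x \<in> Y \<Longrightarrow> y \<in> Y \<Longrightarrow> x \<noteq> y \<Longrightarrow> FP T x > FP T y \<Longrightarrow> FP T' x < FP T' y"
    using assms(2) by (simp_all add: reversible_def strict_ranking_def Let_def Y_def T'_def)
  have "FP T u \<noteq> FP T v"
    using inj_onD[OF inj] uv_Y \<open>u \<noteq> v\<close> by (auto simp: Y_def)
  then consider "FP T u > FP T v" | "FP T v > FP T u"
    by linarith
  then show False
  proof cases
    case 1
    with flips[OF uv_Y \<open>u \<noteq> v\<close>] same_diff show False by linarith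
  next
    case 2
    with flips[OF uv_Y(2,1) not_sym[OF \<open>u \<noteq> v\<close>]] same_diff show False by linarith
  qed
qed

theorem theorem1:
  fixes T :: "'a ptree" and X' :: "'a set"
  assumes "phylo_tree T"
    and "card (leaves T) \<ge> 3"
    and "X' \<subset> leaves T"
    and "strict_ranking T"
    and "reversible T X'"
  shows "\<forall>xi xj. is_cherry T xi xj \<longrightarrow> card (X' \<inter> {xi, xj}) \<ge> 1"
proof (intro allI impI)
  fix xi xj
  assume "is_cherry T xi xj"
  from is_cherry_imp_subtree[OF this] obtain a b where
    "subtree (Node (Leaf xi) a (Leaf xj) b) T \<or> subtree (Node (Leaf xj) a (Leaf xi) b) T"
    by blast
  moreover have "distinct (leaf_list T)"
    using assms(1) by (simp add: phylo_tree_def)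
  ultimately have "xi \<in> X' \<or> xj \<in> X'"
    using reversible_no_kept_cherry[OF _ assms(5)] by blast
  then have "X' \<inter> {xi, xj} \<noteq> {}"
    by blast
  then show "card (X' \<inter> {xi, xj}) \<ge> 1"
    by (simp add: Suc_le_eq card_gt_0_iff)
qed

end
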